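(* Let $\nu$ be a $\Psi$-invariant probability measure and let $F_n:\mathcal{Y}\to[-\infty,0]$, $n\in\mathbb{N}$, be measurable functions satisfying the separated subadditivity condition (S) (with integer times). Assume the limit $\lim_{n\to\infty}\frac1n\int_{\mathcal{Y}}F_n\,d\nu$ exists. Then $$\lim_{n\to\infty}\frac1n\int_{\mathcal{Y}}F_n\,d\nu\le\int_{\mathcal{Y}}\liminf_{n\to\infty}\frac{F_n(y)}{n}\,d\nu(y).$$
   Context: Discrete time: $(\mathcal{Y},\Psi,\nu)$ with $\Psi:\mathcal{Y}\to\mathcal{Y}$ measurable and $\nu$ $\Psi$-invariant. Condition (S): there exist $\ell_0\ge0$ and a non-increasing $\alpha:[\ell_0,\infty)\to[1,\infty)$ with $\lim_{\ell\to\infty}\alpha(\ell)=1$ such that for all $n\ge1$, all $t_1,\dots,t_n\in\mathbb{N}$, all integers $\ell>\ell_0$ and all $y$, $$F_{(n-1)\ell+\sum_{k=1}^nt_k}(y)\le\frac{1}{\alpha(\ell)}\sum_{k=1}^nF_{t_k}\big(\Psi^{(k-1)\ell+\sum_{j=1}^{k-1}t_j}y\big).$$ *)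

theory Defs
  imports "HOL-Probability.Probability"
begin

definition nonpos_integral :: "'a measure \<Rightarrow> ('a \<Rightarrow> ereal) \<Rightarrow> ereal" where
  "nonpos_integral M f = - enn2ereal (\<integral>\<^sup>+ x. e2ennreal (- f x) \<partial>M)"

end

theory Submission
  imports Defs
begin

text \<open>Write \<open>g\<^sub>n = - F\<^sub>n \<ge> 0\<close> and \<open>\<gamma> y = limsup g\<^sub>n(y)/n\<close>, so the right-hand side is
  \<open>- \<integral>\<gamma>\<close>. Condition (S) with two blocks gives \<open>\<gamma>(\<Psi>\<^sup>p y) \<le> \<alpha>(l) \<gamma>(y)\<close> for \<open>p > l\<close>, so the
  orbit envelope \<open>\<gamma>\<^sup>* y = limsup\<^sub>p \<gamma>(\<Psi>\<^sup>p y)\<close> is invariant and \<open>\<gamma>\<^sup>* \<le> \<gamma>\<close>, while invariance of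
  \<open>\<nu>\<close> and reverse Fatou give \<open>\<integral>\<gamma> \<le> \<integral>\<gamma>\<^sup>*\<close>.

  Fix a truncation \<open>\<phi> = min \<gamma>\<^sup>* K\<close> and \<open>\<epsilon> > 0\<close>. Every point starts a block of some length
  \<open>\<ge> m\<^sub>0\<close> on which \<open>g\<close> has grown by at least \<open>\<phi> - \<epsilon>\<close> per step, and outside a set of small
  measure one of length at most \<open>M'\<close>. Along an orbit, choosing such blocks greedily with gaps
  of length \<open>l\<close> covers \<open>[0, N)\<close>, and (S) turns the covering into
  \<open>\<alpha>(l) g\<^sub>N \<ge> N (\<phi> - \<epsilon>) - error\<close>, where the error is small compared with N up to the number of
  visits to the bad set. Integrating and letting the parameters tend to their limits yields
  \<open>- L \<ge> \<integral>\<gamma>\<^sup>* \<ge> \<integral>\<gamma>\<close>.\<close>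

text \<open>\<open>[s, N)\<close> is split into blocks of lengths \<open>t 1, \<dots>, t n\<close>, consecutive blocks being
  separated by gaps of length l; \<open>g t j\<close> is the value of a block of length t starting at j.\<close>
definition separated_blocks_bound ::
    "(nat \<Rightarrow> nat \<Rightarrow> ennreal) \<Rightarrow> nat \<Rightarrow> nat \<Rightarrow> nat \<Rightarrow> ennreal \<Rightarrow> bool" where
  "separated_blocks_bound g l s N v \<longleftrightarrow>
     (\<exists>n t. 1 \<le> n \<and> (\<forall>k\<in>{1..n}. 1 \<le> t k) \<and> (n - 1) * l + (\<Sum>k=1..n. t k) = N - s \<and>
        v \<le> (\<Sum>k=1..n. g (t k) (s + (k - 1) * l + (\<Sum>j=1..k-1. t j))))"

lemma separated_blocks_bound_mono:
  "separated_blocks_bound g l s N v \<Longrightarrow> w \<le> v \<Longrightarrow> separated_blocks_bound g l s N w"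
  unfolding separated_blocks_bound_def by (meson order_trans)

lemma separated_blocks_bound_zero: "s < N \<Longrightarrow> separated_blocks_bound g l s N 0"
  unfolding separated_blocks_bound_def by (intro exI[of _ 1] exI[of _ "\<lambda>_. N - s"]) auto

lemma sum_atLeastAtMost_Suc_cons:
  fixes t :: "nat \<Rightarrow> 'b::comm_monoid_add"
  shows "(\<Sum>j=1..Suc m. (if j = 1 then t0 else t (j - 1))) = t0 + (\<Sum>j=1..m. t j)"
proof -
  have "(\<Sum>j=1..Suc m. (if j = 1 then t0 else t (j - 1)))
      = t0 + (\<Sum>j=Suc 1..Suc m. (if j = 1 then t0 else t (j - 1)))"
    by (subst sum.atLeast_Suc_atMost) auto
  also have "(\<Sum>j=Suc 1..Suc m. (if j = 1 then t0 else t (j - 1))) = (\<Sum>j=1..m. t j)"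
    by (simp only: sum.shift_bounds_cl_Suc_ivl) simp
  finally show ?thesis .
qed

lemma separated_blocks_bound_prepend:
  assumes t0: "1 \<le> t0" and v: "separated_blocks_bound g l (s + t0 + l) N v"
  shows "separated_blocks_bound g l s N (g t0 s + v)"
proof -
  from v obtain n t where n: "1 \<le> n" and t: "\<forall>k\<in>{1..n}. 1 \<le> t k"
    and len: "(n - 1) * l + (\<Sum>k=1..n. t k) = N - (s + t0 + l)"
    and le: "v \<le> (\<Sum>k=1..n. g (t k) (s + t0 + l + (k - 1) * l + (\<Sum>j=1..k-1. t j)))"
    unfolding separated_blocks_bound_def by blast
  define t' where "t' k = (if k = 1 then t0 else t (k - 1))" for k
  have "1 \<le> t 1" using n t by auto
  also have "t 1 \<le> (\<Sum>k=1..n. t k)" by (rule member_le_sum) (use n in auto)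
  finally have "s + t0 + l < N" using len by linarith
  then have "(Suc n - 1) * l + (\<Sum>k=1..Suc n. t' k) = N - s"
    using len n unfolding t'_def sum_atLeastAtMost_Suc_cons by (cases n) (auto simp: algebra_simps)
  moreover have "\<forall>k\<in>{1..Suc n}. 1 \<le> t' k"
  proof
    fix k assume k: "k \<in> {1..Suc n}"
    show "1 \<le> t' k"
    proof (cases "k = 1")
      case False
      with k have "k - 1 \<in> {1..n}" by auto
      with t False show ?thesis by (simp add: t'_def)
    qed (use t0 in \<open>simp add: t'_def\<close>)
  qed
  moreover have "(\<Sum>k=1..Suc n. g (t' k) (s + (k - 1) * l + (\<Sum>j=1..k-1. t' j)))
      = g t0 s + (\<Sum>k=1..n. g (t k) (s + t0 + l + (k - 1) * l + (\<Sum>j=1..k-1. t j)))"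
  proof -
    have "(\<Sum>k=1..Suc n. g (t' k) (s + (k - 1) * l + (\<Sum>j=1..k-1. t' j)))
        = g t0 s + (\<Sum>k=Suc 1..Suc n. g (t' k) (s + (k - 1) * l + (\<Sum>j=1..k-1. t' j)))"
      by (subst sum.atLeast_Suc_atMost) (auto simp: t'_def)
    also have "\<dots> = g t0 s + (\<Sum>k=1..n. g (t' (Suc k)) (s + (Suc k - 1) * l + (\<Sum>j=1..Suc k - 1. t' j)))"
      by (subst sum.shift_bounds_cl_Suc_ivl[symmetric]) simp
    also have "(\<Sum>k=1..n. g (t' (Suc k)) (s + (Suc k - 1) * l + (\<Sum>j=1..Suc k - 1. t' j)))
        = (\<Sum>k=1..n. g (t k) (s + t0 + l + (k - 1) * l + (\<Sum>j=1..k-1. t j)))"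
    proof (rule sum.cong[OF refl])
      fix k assume "k \<in> {1..n}"
      then obtain m where m: "k = Suc m" by (cases k) auto
      show "g (t' (Suc k)) (s + (Suc k - 1) * l + (\<Sum>j=1..Suc k - 1. t' j))
          = g (t k) (s + t0 + l + (k - 1) * l + (\<Sum>j=1..k-1. t j))"
        using sum_atLeastAtMost_Suc_cons[of t0 t m] by (simp add: m t'_def algebra_simps)
    qed
    finally show ?thesis .
  qed
  ultimately show ?thesis
    unfolding separated_blocks_bound_def using le n
    by (intro exI[of _ "Suc n"] exI[of _ t']) (auto intro: add_left_mono)
qed

lemma ennreal_add_le: "ennreal (x + y) \<le> ennreal x + ennreal y"
  by (simp add: ennreal_plus_if ennreal_leI)

text \<open>Greedy covering: a good point starts a block of length in \<open>[m0, M]\<close> worth at least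
  \<open>a\<close> per step, a bad point a block of length 1 worth nothing. Each gap costs at most \<open>K l\<close>, each
  bad point at most \<open>K (l + 1)\<close>, and the final stretch, too short for a good block, at most
  \<open>K (M + l + 1)\<close>.\<close>
lemma separated_blocks_greedy:
  fixes g :: "nat \<Rightarrow> nat \<Rightarrow> ennreal" and good :: "nat \<Rightarrow> bool" and a K :: real
  assumes m0: "1 \<le> m0" and aK: "a \<le> K" and K: "0 \<le> K"
    and good: "\<And>j. good j \<Longrightarrow> \<exists>t\<in>{m0..M}. ennreal (real t * a) \<le> g t j"
    and "s < N"
  shows "separated_blocks_bound g l s N
      (ennreal (real (N - s) * a - K * (real l * real (N - s) / real m0
          + real (l + 1) * real (card {j\<in>{s..<N}. \<not> good j}) + real (M + l + 1))))"
  using \<open>s < N\<close>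
proof (induction "N - s" arbitrary: s rule: less_induct)
  case less
  define bad where "bad s = real (card {j\<in>{s..<N}. \<not> good j})" for s
  define A where "A s = real (N - s) * a
      - K * (real l * real (N - s) / real m0 + real (l + 1) * bad s + real (M + l + 1))" for s
  have prepend: "separated_blocks_bound g l s N (ennreal (A s))"
    if t0: "1 \<le> t0" "s + t0 + l < N" and r: "ennreal r \<le> g t0 s"
      and A: "A s \<le> r + A (s + t0 + l)" for t0 r
  proof -
    have "separated_blocks_bound g l (s + t0 + l) N (ennreal (A (s + t0 + l)))"
      using less.hyps[of "s + t0 + l"] t0 unfolding A_def bad_def by auto
    then have "separated_blocks_bound g l s N (g t0 s + ennreal (A (s + t0 + l)))"
      by (rule separated_blocks_bound_prepend[OF t0(1)])
    moreover have "ennreal (A s) \<le> g t0 s + ennreal (A (s + t0 + l))"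
    proof -
      have "ennreal (A s) \<le> ennreal (r + A (s + t0 + l))" using A by (rule ennreal_leI)
      also have "\<dots> \<le> ennreal r + ennreal (A (s + t0 + l))" by (rule ennreal_add_le)
      also have "\<dots> \<le> g t0 s + ennreal (A (s + t0 + l))" using r by (rule add_right_mono)
      finally show ?thesis .
    qed
    ultimately show ?thesis by (rule separated_blocks_bound_mono)
  qed
  have "separated_blocks_bound g l s N (ennreal (A s))"
  proof (cases "N \<le> s + M + l + 1")
    case True
    have "real (N - s) * a \<le> real (N - s) * K" using aK by (intro mult_left_mono) auto
    also have "\<dots> \<le> real (M + l + 1) * K" using True K by (intro mult_right_mono) auto
    finally have "real (N - s) * a \<le> real (M + l + 1) * K" .
    moreover have "0 \<le> K * (real l * real (N - s) / real m0 + real (l + 1) * bad s)"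
      using K by (simp add: bad_def)
    ultimately have "A s \<le> 0" unfolding A_def by (simp add: algebra_simps)
    then show ?thesis
      using separated_blocks_bound_zero[OF less.prems] by (simp add: ennreal_neg)
  next
    case False
    show ?thesis
    proof (cases "good s")
      case True
      then obtain t0 where t0: "m0 \<le> t0" "t0 \<le> M" and r: "ennreal (real t0 * a) \<le> g t0 s"
        using good[OF True] by (auto simp del: ennreal_le_iff)
      have "bad (s + t0 + l) \<le> bad s"
        unfolding bad_def by (intro of_nat_mono card_mono) auto
      then have bad_le: "K * (real (l + 1) * bad (s + t0 + l)) \<le> K * (real (l + 1) * bad s)"
        using K by (intro mult_left_mono) auto
      have "real l * a \<le> K * (real l * real (t0 + l) / real m0)"
      proof -
        have "real l * a \<le> real l * K" using aK by (intro mult_left_mono) auto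
        also have "real l \<le> real l * real (t0 + l) / real m0"
          using m0 t0 by (simp add: le_divide_eq mult_left_mono)
        then have "real l * K \<le> K * (real l * real (t0 + l) / real m0)"
          using K by (metis mult.commute mult_left_mono)
        finally show ?thesis .
      qed
      moreover have N_split: "N - s = (N - (s + t0 + l)) + (t0 + l)"
        using False t0 by auto
      ultimately have "A s \<le> real t0 * a + A (s + t0 + l)"
        using bad_le unfolding A_def N_split of_nat_add by (simp add: algebra_simps add_divide_distrib)
      with r t0 m0 False show ?thesis by (intro prepend) auto
    next
      case False
      have "card (insert s {j\<in>{s + 1 + l..<N}. \<not> good j}) \<le> card {j\<in>{s..<N}. \<not> good j}"
        using False less.prems by (intro card_mono) auto
      then have bad_le: "bad (s + 1 + l) + 1 \<le> bad s"
        unfolding bad_def by simp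
      have "real (1 + l) * a \<le> K * real (l + 1)"
        using aK by (simp add: mult.commute mult_left_mono)
      also have "\<dots> \<le> K * (real (l + 1) * (bad s - bad (s + 1 + l)))"
        using bad_le K by (intro mult_left_mono) auto
      finally have "real (1 + l) * a \<le> K * (real (l + 1) * (bad s - bad (s + 1 + l)))" .
      moreover have "0 \<le> K * (real l * real (1 + l) / real m0)" using K by simp
      moreover have N_split: "N - s = (N - (s + 1 + l)) + (1 + l)"
        using \<open>\<not> N \<le> s + M + l + 1\<close> by auto
      ultimately have "A s \<le> 0 + A (s + 1 + l)"
        unfolding A_def N_split of_nat_add by (simp add: algebra_simps add_divide_distrib)
      with \<open>\<not> N \<le> s + M + l + 1\<close> show ?thesis by (intro prepend[of 1 0]) auto
    qed
  qed
  then show ?case unfolding A_def bad_def .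
qed

lemma ereal_uminus_add_nonpos: "a \<le> 0 \<Longrightarrow> b \<le> 0 \<Longrightarrow> - (a + b) = - a + - (b::ereal)"
  by (cases a; cases b) auto

lemma sum_uminus_ereal_nonpos:
  "(\<And>i. i \<in> I \<Longrightarrow> f i \<le> 0) \<Longrightarrow> (\<Sum>i\<in>I. - f i) = - (\<Sum>i\<in>I. f i :: ereal)"
proof (induct I rule: infinite_finite_induct)
  case (insert x I)
  then show ?case using sum_nonpos[of I f] by (simp add: ereal_uminus_add_nonpos)
qed auto

lemma ereal_mult_inverse_le:
  fixes x :: ereal
  assumes "ereal a < x * ereal (1 / real n)" "0 \<le> x" "n > 0"
  shows "ereal (real n * a) \<le> x"
proof (cases x)
  case (real r)
  then have "a < r / real n" using assms by simp
  then have "real n * a < r" using assms(3) by (simp add: field_simps)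
  then show ?thesis using real by simp
qed (use assms in auto)

lemma ereal_mult_inverse_rescale:
  fixes a x :: ereal and \<alpha> c m p :: real
  assumes a: "a \<le> ereal \<alpha> * x" and x: "0 \<le> x" and \<alpha>: "1 \<le> \<alpha>" and m: "0 < m" and p: "0 \<le> p"
    and mp: "m + p \<le> c * m"
  shows "a * ereal (1 / m) \<le> ereal (c * \<alpha>) * (x * ereal (1 / (m + p)))"
proof -
  have "a * ereal (1 / m) \<le> ereal \<alpha> * x * ereal (1 / m)"
    using a m by (intro ereal_mult_right_mono) auto
  also have "\<dots> \<le> ereal (c * \<alpha>) * (x * ereal (1 / (m + p)))"
  proof (cases x)
    case (real r)
    have "\<alpha> * (m + p) \<le> \<alpha> * (c * m)" using mp \<alpha> by (intro mult_left_mono) auto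
    then have "\<alpha> / m \<le> c * \<alpha> / (m + p)" using m p by (simp add: field_simps distrib_left)
    then have "r * (\<alpha> / m) \<le> r * (c * \<alpha> / (m + p))" using x real by (intro mult_left_mono) auto
    then show ?thesis using real by (simp add: field_simps)
  next
    case PInf
    have "1 * m \<le> c * m" using mp p by simp
    then have "1 \<le> c" using m by (rule mult_right_le_imp_le)
    then show ?thesis using PInf \<alpha> m p by simp
  next
    case MInf
    then show ?thesis using x by simp
  qed
  finally show ?thesis .
qed

lemma SUP_min_of_nat_ennreal: "(SUP K::nat. min x (of_nat K :: ennreal)) = x"
proof -
  have "(SUP K::nat. min x (of_nat K :: ennreal)) = inf x (SUP K::nat. of_nat K)"
    using inf_SUP[of x "of_nat" UNIV] unfolding inf_min by simp
  also have "\<dots> = x" by (simp add: ennreal_SUP_of_nat_eq_top)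
  finally show ?thesis .
qed

lemma nn_integral_SUP_min_of_nat:
  assumes [measurable]: "f \<in> borel_measurable M"
  shows "(\<integral>\<^sup>+x. f x \<partial>M) = (SUP K::nat. \<integral>\<^sup>+x. min (f x) (of_nat K) \<partial>M)"
proof -
  have "(\<integral>\<^sup>+x. f x \<partial>M) = (\<integral>\<^sup>+x. (SUP K::nat. min (f x) (of_nat K)) \<partial>M)"
    by (simp add: SUP_min_of_nat_ennreal)
  also have "\<dots> = (SUP K::nat. \<integral>\<^sup>+x. min (f x) (of_nat K) \<partial>M)"
    by (rule nn_integral_monotone_convergence_SUP)
       (auto simp: incseq_def le_fun_def intro: min.coboundedI2)
  finally show ?thesis .
qed

lemma ennreal_integral_le_nn_integral:
  assumes "integrable M f"
  shows "ennreal (integral\<^sup>L M f) \<le> (\<integral>\<^sup>+x. ennreal (f x) \<partial>M)"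
proof -
  have "integral\<^sup>L M f \<le> integral\<^sup>L M (\<lambda>x. max (f x) 0)"
    using assms by (intro integral_mono) auto
  then have "ennreal (integral\<^sup>L M f) \<le> ennreal (integral\<^sup>L M (\<lambda>x. max (f x) 0))"
    by (rule ennreal_leI)
  also have "\<dots> = (\<integral>\<^sup>+x. ennreal (max (f x) 0) \<partial>M)"
    using assms by (intro nn_integral_eq_integral[symmetric]) auto
  also have "\<dots> = (\<integral>\<^sup>+x. ennreal (f x) \<partial>M)"
    by (intro nn_integral_cong) (auto simp: max_def ennreal_neg)
  finally show ?thesis .
qed

lemma sum_indicator_eq_card:
  fixes N :: nat
  shows "(\<Sum>j<N. indicator B (f j) :: real) = real (card {j\<in>{0..<N}. f j \<in> B})"
proof -
  have "(\<Sum>j<N. indicator B (f j) :: real) = (\<Sum>j<N. if f j \<in> B then 1 else 0)"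
    by (simp add: indicator_def of_bool_def)
  also have "\<dots> = (\<Sum>j\<in>{j\<in>{..<N}. f j \<in> B}. 1)"
    by (rule sum.inter_filter[symmetric]) simp
  also have "{j\<in>{..<N}. f j \<in> B} = {j\<in>{0..<N}. f j \<in> B}" by auto
  finally show ?thesis by simp
qed

locale measure_preserving_map = prob_space M for M :: "'a measure" +
  fixes \<Psi> :: "'a \<Rightarrow> 'a"
  assumes measurable_map[measurable]: "\<Psi> \<in> M \<rightarrow>\<^sub>M M"
    and distr_map: "distr M M \<Psi> = M"
begin

lemma measurable_funpow[measurable]: "\<Psi> ^^ n \<in> M \<rightarrow>\<^sub>M M"
proof (induct n)
  case 0
  then show ?case by (simp add: measurable_ident_sets id_def)
next
  case (Suc n)
  then show ?case unfolding funpow_Suc_right by (rule measurable_comp[OF measurable_map])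
qed

lemma funpow_in_space: "y \<in> space M \<Longrightarrow> (\<Psi> ^^ n) y \<in> space M"
  using measurable_space[OF measurable_funpow] .

lemma distr_funpow: "distr M M (\<Psi> ^^ n) = M"
proof (induct n)
  case 0
  then show ?case by (simp add: id_def distr_id)
next
  case (Suc n)
  have "distr M M (\<Psi> ^^ Suc n) = distr (distr M M \<Psi>) M (\<Psi> ^^ n)"
    unfolding funpow_Suc_right by (rule distr_distr[symmetric, OF measurable_funpow measurable_map])
  then show ?case by (simp only: distr_map Suc)
qed

lemma nn_integral_funpow:
  assumes [measurable]: "f \<in> borel_measurable M"
  shows "(\<integral>\<^sup>+x. f ((\<Psi> ^^ n) x) \<partial>M) = integral\<^sup>N M f"
  using nn_integral_distr[OF measurable_funpow, of f n] by (simp add: distr_funpow)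

lemma integral_funpow:
  assumes [measurable]: "f \<in> borel_measurable M"
  shows "(\<integral>x. f ((\<Psi> ^^ n) x) \<partial>M) = (integral\<^sup>L M f :: real)"
  using integral_distr[OF measurable_funpow, of f n] by (simp add: distr_funpow)

end

locale separated_subadditive = measure_preserving_map M \<Psi> for M :: "'a measure" and \<Psi> +
  fixes F :: "nat \<Rightarrow> 'a \<Rightarrow> ereal" and l0 :: real and \<alpha> :: "real \<Rightarrow> real"
  assumes measurable_F[measurable]: "\<And>n. F n \<in> borel_measurable M"
    and F_nonpos: "\<And>n y. y \<in> space M \<Longrightarrow> F n y \<le> 0"
    and \<alpha>_ge_1: "\<And>l. l \<ge> l0 \<Longrightarrow> \<alpha> l \<ge> 1"
    and \<alpha>_tendsto_1: "(\<alpha> \<longlongrightarrow> 1) at_top"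
    and separated_subadditive: "\<And>n (t :: nat \<Rightarrow> nat) (l :: nat) y.
      n \<ge> 1 \<Longrightarrow> (\<forall>k\<in>{1..n}. t k \<ge> 1) \<Longrightarrow> real l > l0 \<Longrightarrow> y \<in> space M \<Longrightarrow>
      F ((n - 1) * l + (\<Sum>k=1..n. t k)) y
        \<le> ereal (1 / \<alpha> (real l)) * (\<Sum>k=1..n. F (t k) ((\<Psi> ^^ ((k - 1) * l + (\<Sum>j=1..k-1. t j))) y))"
begin

definition negF :: "nat \<Rightarrow> 'a \<Rightarrow> ennreal" where
  "negF n y = e2ennreal (- F n y)"

lemma measurable_negF[measurable]: "negF n \<in> borel_measurable M"
  unfolding negF_def by measurable

lemma nonpos_integral_F: "nonpos_integral M (F n) = - enn2ereal (\<integral>\<^sup>+y. negF n y \<partial>M)"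
  unfolding nonpos_integral_def negF_def ..

lemma \<alpha>_gap_ge_1: "real l > l0 \<Longrightarrow> \<alpha> (real l) \<ge> 1"
  using \<alpha>_ge_1 by simp

lemma exists_gap_\<alpha>_less:
  assumes "d > 1"
  obtains l :: nat where "real l > l0" "\<alpha> (real l) < d"
proof -
  obtain X where X: "\<And>x. x \<ge> X \<Longrightarrow> \<alpha> x < d"
    using order_tendstoD(2)[OF \<alpha>_tendsto_1 assms] by (auto simp: eventually_at_top_linorder)
  define l where "l = nat \<lceil>max X l0\<rceil> + 1"
  have "real l > max X l0" unfolding l_def by linarith
  then show ?thesis using X[of "real l"] that[of l] by simp
qed

lemma separated_superadditive_negF:
  assumes n: "n \<ge> 1" and t: "\<forall>k\<in>{1..n}. t k \<ge> 1" and l: "real l > l0" and y: "y \<in> space M"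
  shows "ennreal (1 / \<alpha> (real l)) * (\<Sum>k=1..n. negF (t k) ((\<Psi> ^^ ((k - 1) * l + (\<Sum>j=1..k-1. t j))) y))
      \<le> negF ((n - 1) * l + (\<Sum>k=1..n. t k)) y"
proof -
  define a where "a k = F (t k) ((\<Psi> ^^ ((k - 1) * l + (\<Sum>j=1..k-1. t j))) y)" for k
  define c where "c = 1 / \<alpha> (real l)"
  have c: "c \<ge> 0" using \<alpha>_gap_ge_1[OF l] by (simp add: c_def)
  have a: "\<And>k. a k \<le> 0" using F_nonpos funpow_in_space[OF y] by (simp add: a_def)
  have "enn2ereal (ennreal c * (\<Sum>k=1..n. negF (t k) ((\<Psi> ^^ ((k - 1) * l + (\<Sum>j=1..k-1. t j))) y)))
      = ereal c * (\<Sum>k=1..n. - a k)"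
    using a c by (simp add: times_ennreal.rep_eq sum_enn2ereal[symmetric] negF_def a_def
        enn2ereal_e2ennreal enn2ereal_ennreal)
  also have "\<dots> = - (ereal c * (\<Sum>k=1..n. a k))"
    using a by (simp add: sum_uminus_ereal_nonpos)
  also have "\<dots> \<le> - F ((n - 1) * l + (\<Sum>k=1..n. t k)) y"
    using separated_subadditive[OF n t l y] by (simp add: a_def c_def)
  also have "\<dots> = enn2ereal (negF ((n - 1) * l + (\<Sum>k=1..n. t k)) y)"
    using F_nonpos[OF y] by (simp add: negF_def enn2ereal_e2ennreal)
  finally show ?thesis unfolding c_def by (simp add: less_eq_ennreal.rep_eq)
qed

text \<open>Condition (S) with two blocks, the first of which is discarded.\<close>
lemma negF_funpow_le:
  assumes l: "real l > l0" and p: "p \<ge> l + 1" and m: "m \<ge> 1" and y: "y \<in> space M"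
  shows "negF m ((\<Psi> ^^ p) y) \<le> ennreal (\<alpha> (real l)) * negF (p + m) y"
proof -
  define t where "t k = (if k = 1 then p - l else m)" for k :: nat
  have t: "\<forall>k\<in>{1..2}. 1 \<le> t k" using p m by (auto simp: t_def)
  have \<alpha>: "\<alpha> (real l) \<ge> 1" using \<alpha>_gap_ge_1[OF l] .
  have "ennreal (1 / \<alpha> (real l)) * (negF (p - l) y + negF m ((\<Psi> ^^ p) y)) \<le> negF (p + m) y"
    using separated_superadditive_negF[OF _ t l y] p by (simp add: t_def numeral_2_eq_2)
  then have "ennreal (1 / \<alpha> (real l)) * negF m ((\<Psi> ^^ p) y) \<le> negF (p + m) y"
    by (rule order_trans[rotated]) (intro mult_left_mono; simp)
  then have "ennreal (\<alpha> (real l)) * (ennreal (1 / \<alpha> (real l)) * negF m ((\<Psi> ^^ p) y))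
      \<le> ennreal (\<alpha> (real l)) * negF (p + m) y"
    by (rule mult_left_mono) simp
  then show ?thesis
    using \<alpha> by (simp add: ennreal_mult[symmetric] mult.assoc[symmetric])
qed

lemma uminus_F_funpow_le:
  assumes l: "real l > l0" and p: "p \<ge> l + 1" and m: "m \<ge> 1" and y: "y \<in> space M"
  shows "- F m ((\<Psi> ^^ p) y) \<le> ereal (\<alpha> (real l)) * (- F (p + m) y)"
proof -
  have "enn2ereal (negF m ((\<Psi> ^^ p) y)) \<le> enn2ereal (ennreal (\<alpha> (real l)) * negF (p + m) y)"
    using negF_funpow_le[OF assms] by (simp add: less_eq_ennreal.rep_eq)
  then show ?thesis
    using F_nonpos[OF funpow_in_space[OF y]] F_nonpos[OF y] \<alpha>_gap_ge_1[OF l]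
    by (simp add: negF_def times_ennreal.rep_eq enn2ereal_e2ennreal enn2ereal_ennreal)
qed

definition growth :: "'a \<Rightarrow> ereal" where
  "growth y = limsup (\<lambda>n. - F n y * ereal (1 / real n))"

definition orbit_growth :: "'a \<Rightarrow> ereal" where
  "orbit_growth y = limsup (\<lambda>p. growth ((\<Psi> ^^ p) y))"

lemma measurable_growth[measurable]: "growth \<in> borel_measurable M"
  unfolding growth_def by measurable

lemma measurable_orbit_growth[measurable]: "orbit_growth \<in> borel_measurable M"
  unfolding orbit_growth_def by measurable

lemma uminus_liminf_eq_growth: "- liminf (\<lambda>n. F n y / ereal (real n)) = growth y"
proof -
  have "- liminf (\<lambda>n. F n y / ereal (real n)) = limsup (\<lambda>n. - (F n y / ereal (real n)))"
    by (simp add: ereal_Limsup_uminus)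
  also have "\<dots> = growth y" unfolding growth_def
  proof (rule Limsup_eq)
    show "\<forall>\<^sub>F n in sequentially. - (F n y / ereal (real n)) = - F n y * ereal (1 / real n)"
      unfolding eventually_sequentially
      by (intro exI[of _ 1]) (auto simp: divide_ereal_def ereal_mult_minus_left inverse_eq_divide)
  qed
  finally show ?thesis .
qed

lemma growth_nonneg: "y \<in> space M \<Longrightarrow> 0 \<le> growth y"
  unfolding growth_def
  by (intro le_Limsup always_eventually allI ereal_0_le_mult) (auto simp: F_nonpos)

lemma orbit_growth_nonneg: "y \<in> space M \<Longrightarrow> 0 \<le> orbit_growth y"
  unfolding orbit_growth_def
  by (intro le_Limsup) (auto intro!: always_eventually growth_nonneg funpow_in_space)

lemma orbit_growth_funpow: "orbit_growth ((\<Psi> ^^ j) y) = orbit_growth y"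
proof -
  have "orbit_growth (\<Psi> x) = orbit_growth x" for x
  proof -
    have "orbit_growth (\<Psi> x) = limsup (\<lambda>p. growth ((\<Psi> ^^ (p + 1)) x))"
      unfolding orbit_growth_def by (simp add: funpow_Suc_right del: funpow.simps)
    also have "\<dots> = orbit_growth x" unfolding orbit_growth_def by (rule limsup_shift)
    finally show ?thesis .
  qed
  then show ?thesis by (induct j) auto
qed

text \<open>Shifting the starting point by p costs a factor \<open>\<alpha>\<close> by condition (S) and a factor c
  for renormalising \<open>1/m\<close> to \<open>1/(m + p)\<close>, which is harmless for large m.\<close>
lemma growth_funpow_le:
  assumes l: "real l > l0" and p: "p \<ge> l + 1" and c: "c > 1" and y: "y \<in> space M"
  shows "growth ((\<Psi> ^^ p) y) \<le> ereal (c * \<alpha> (real l)) * growth y"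
proof -
  define b where "b n = - F n y * ereal (1 / real n)" for n
  have \<alpha>: "\<alpha> (real l) \<ge> 1" using \<alpha>_gap_ge_1[OF l] .
  obtain m1 :: nat where m1: "real p / (c - 1) \<le> real m1" using real_arch_simple by blast
  have "- F m ((\<Psi> ^^ p) y) * ereal (1 / real m) \<le> ereal (c * \<alpha> (real l)) * b (m + p)"
    if m: "max 1 m1 \<le> m" for m
  proof -
    have "real p \<le> (c - 1) * real m1"
      using m1 c by (simp add: divide_le_eq mult.commute)
    also have "\<dots> \<le> (c - 1) * real m"
      using m c by (intro mult_left_mono) auto
    finally have "real p \<le> (c - 1) * real m" .
    then have "real m + real p \<le> c * real m" by (simp add: algebra_simps)
    from ereal_mult_inverse_rescale[OF uminus_F_funpow_le[OF l p _ y] _ \<alpha> _ _ this] m F_nonpos[OF y]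
    show ?thesis by (simp add: b_def add.commute)
  qed
  then have "growth ((\<Psi> ^^ p) y) \<le> limsup (\<lambda>m. ereal (c * \<alpha> (real l)) * b (m + p))"
    unfolding growth_def by (intro Limsup_mono) (auto simp: eventually_sequentially intro!: exI[of _ "max 1 m1"])
  also have "\<dots> = ereal (c * \<alpha> (real l)) * limsup (\<lambda>m. b (m + p))"
    using c \<alpha> by (intro limsup_ereal_mult_left) auto
  also have "limsup (\<lambda>m. b (m + p)) = growth y"
    unfolding growth_def b_def by (rule limsup_shift_k)
  finally show ?thesis .
qed

lemma orbit_growth_le_growth:
  assumes y: "y \<in> space M"
  shows "orbit_growth y \<le> growth y"
proof -
  have scaled: "orbit_growth y \<le> ereal d * growth y" if d: "d > 1" for d
  proof -
    obtain l :: nat where l: "real l > l0" "\<alpha> (real l) < d" using exists_gap_\<alpha>_less[OF d] .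
    have \<alpha>: "\<alpha> (real l) \<ge> 1" using \<alpha>_gap_ge_1[OF l(1)] .
    have "d / \<alpha> (real l) > 1" "d / \<alpha> (real l) * \<alpha> (real l) = d" using l \<alpha> by auto
    then have "\<forall>p\<ge>l + 1. growth ((\<Psi> ^^ p) y) \<le> ereal d * growth y"
      using growth_funpow_le[OF l(1) _ _ y] by metis
    then show ?thesis
      unfolding orbit_growth_def by (intro Limsup_bounded) (auto simp: eventually_sequentially)
  qed
  show ?thesis
  proof (cases "growth y")
    case (real r)
    have r: "r \<ge> 0" using growth_nonneg[OF y] real by simp
    show ?thesis
    proof (rule ereal_le_epsilon2)
      fix e :: real assume e: "0 < e"
      have "orbit_growth y \<le> ereal ((1 + e / (r + 1)) * r)"
        using scaled[of "1 + e / (r + 1)"] e r real by simp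
      also have "(1 + e / (r + 1)) * r \<le> r + e"
        using e r by (simp add: field_simps)
      finally show "orbit_growth y \<le> growth y + ereal e" using real by simp
    qed
  qed (use growth_nonneg[OF y] in simp_all)
qed

text \<open>Reverse Fatou for the truncations \<open>min (growth \<circ> \<Psi>\<^sup>p) K\<close>, whose integrals do not
  depend on p by invariance of the measure.\<close>
lemma nn_integral_growth_le_orbit_growth:
  "(\<integral>\<^sup>+y. e2ennreal (growth y) \<partial>M) \<le> (\<integral>\<^sup>+y. e2ennreal (orbit_growth y) \<partial>M)"
proof -
  have "(\<integral>\<^sup>+y. min (e2ennreal (growth y)) (of_nat K) \<partial>M) \<le> (\<integral>\<^sup>+y. e2ennreal (orbit_growth y) \<partial>M)"
    for K :: nat
  proof -
    define u where "u p y = min (e2ennreal (growth ((\<Psi> ^^ p) y))) (of_nat K)" for p y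
    have [measurable]: "u p \<in> borel_measurable M" for p unfolding u_def by measurable
    have "(\<integral>\<^sup>+y. min (e2ennreal (growth y)) (of_nat K) \<partial>M) = limsup (\<lambda>p. integral\<^sup>N M (u p))"
      unfolding u_def by (subst nn_integral_funpow) (simp_all add: Limsup_const)
    also have "\<dots> \<le> (\<integral>\<^sup>+ y. limsup (\<lambda>p. u p y) \<partial>M)"
      by (rule nn_integral_limsup[where w="\<lambda>_. of_nat K"])
         (auto simp: u_def emeasure_space_1 ennreal_of_nat_eq_real_of_nat)
    also have "\<dots> \<le> (\<integral>\<^sup>+y. e2ennreal (orbit_growth y) \<partial>M)"
    proof (rule nn_integral_mono)
      fix y
      have "limsup (\<lambda>p. u p y) \<le> limsup (\<lambda>p. e2ennreal (growth ((\<Psi> ^^ p) y)))"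
        unfolding u_def by (intro Limsup_mono always_eventually) auto
      also have "\<dots> = e2ennreal (orbit_growth y)"
        unfolding orbit_growth_def
        by (rule Limsup_compose_continuous_mono[OF continuous_on_e2ennreal]) (auto intro: monoI e2ennreal_mono)
      finally show "limsup (\<lambda>p. u p y) \<le> e2ennreal (orbit_growth y)" .
    qed
    finally show ?thesis .
  qed
  then show ?thesis
    by (subst nn_integral_SUP_min_of_nat) (auto intro: SUP_least)
qed

lemma exists_long_block_rate_ge:
  assumes y: "y \<in> space M" and r: "ereal r < growth y"
  shows "\<exists>t\<ge>m0. ennreal (real t * r) \<le> negF t y"
proof -
  define b where "b n = - F n y * ereal (1 / real n)" for n
  have "growth y = limsup (\<lambda>n. b (n + Suc m0))"
    unfolding growth_def b_def by (rule limsup_shift_k[symmetric])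
  with r obtain i where "ereal r < b (i + Suc m0)" using Limsup_obtain by force
  then have "ereal (real (i + Suc m0) * r) \<le> - F (i + Suc m0) y"
    by (intro ereal_mult_inverse_le) (use F_nonpos[OF y] in \<open>auto simp: b_def\<close>)
  then have "ennreal (real (i + Suc m0) * r) \<le> negF (i + Suc m0) y"
    unfolding negF_def by (metis e2ennreal_ereal e2ennreal_mono)
  then show ?thesis by (intro exI[of _ "i + Suc m0"]) auto
qed

definition trunc_growth :: "real \<Rightarrow> 'a \<Rightarrow> real" where
  "trunc_growth K y = real_of_ereal (min (orbit_growth y) (ereal K))"

lemma measurable_trunc_growth[measurable]: "trunc_growth K \<in> borel_measurable M"
  unfolding trunc_growth_def by measurable

lemma trunc_growth_funpow: "trunc_growth K ((\<Psi> ^^ j) y) = trunc_growth K y"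
  by (simp add: trunc_growth_def orbit_growth_funpow)

lemma
  assumes y: "y \<in> space M" and K: "K \<ge> 0"
  shows ereal_trunc_growth: "ereal (trunc_growth K y) = min (orbit_growth y) (ereal K)"
    and trunc_growth_nonneg: "0 \<le> trunc_growth K y"
    and trunc_growth_le: "trunc_growth K y \<le> K"
    and trunc_growth_le_orbit_growth: "ereal (trunc_growth K y) \<le> orbit_growth y"
proof -
  have "0 \<le> orbit_growth y" by (rule orbit_growth_nonneg[OF y])
  then show eq: "ereal (trunc_growth K y) = min (orbit_growth y) (ereal K)"
    unfolding trunc_growth_def using K by (cases "orbit_growth y") (auto simp: min_def)
  then show "0 \<le> trunc_growth K y"
    using \<open>0 \<le> orbit_growth y\<close> K by (metis ereal_less_eq(5) min.bounded_iff zero_ereal_def)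
  from eq show "trunc_growth K y \<le> K" by (metis ereal_less_eq(3) min.cobounded2)
  from eq show "ereal (trunc_growth K y) \<le> orbit_growth y" by simp
qed

lemma nn_integral_trunc_growth:
  "(\<integral>\<^sup>+y. min (e2ennreal (orbit_growth y)) (of_nat K) \<partial>M) = ennreal (\<integral>y. trunc_growth (real K) y \<partial>M)"
proof -
  have "(\<integral>\<^sup>+y. min (e2ennreal (orbit_growth y)) (of_nat K) \<partial>M) = (\<integral>\<^sup>+y. ennreal (trunc_growth (real K) y) \<partial>M)"
  proof (intro nn_integral_cong)
    fix y assume y: "y \<in> space M"
    have "ennreal (trunc_growth (real K) y) = e2ennreal (min (orbit_growth y) (ereal (real K)))"
      using ereal_trunc_growth[OF y, of "real K"] by (simp flip: e2ennreal_ereal)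
    also have "\<dots> = min (e2ennreal (orbit_growth y)) (e2ennreal (ereal (real K)))"
      by (rule min_of_mono[symmetric]) (auto intro: monoI e2ennreal_mono)
    also have "\<dots> = min (e2ennreal (orbit_growth y)) (of_nat K)"
      by (simp add: e2ennreal_ereal ennreal_of_nat_eq_real_of_nat)
    finally show "min (e2ennreal (orbit_growth y)) (of_nat K) = ennreal (trunc_growth (real K) y)" ..
  qed
  also have "\<dots> = ennreal (\<integral>y. trunc_growth (real K) y \<partial>M)"
    by (rule nn_integral_eq_integral)
       (auto intro!: integrable_const_bound[where B="real K"] simp: trunc_growth_nonneg trunc_growth_le)
  finally show ?thesis .
qed

definition bad_set :: "real \<Rightarrow> real \<Rightarrow> nat \<Rightarrow> nat \<Rightarrow> 'a set" where
  "bad_set K eps m0 M' =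
     {y\<in>space M. \<not> (\<exists>t\<in>{m0..M'}. ennreal (real t * (trunc_growth K y - eps)) \<le> negF t y)}"

lemma sets_bad_set[measurable]: "bad_set K eps m0 M' \<in> sets M"
  unfolding bad_set_def by measurable

lemma measure_bad_set_less:
  assumes K: "K \<ge> 0" and eps: "eps > 0" and d: "d > 0"
  obtains M' where "measure M (bad_set K eps m0 M') < d"
proof -
  have "antimono_on UNIV (\<lambda>M'. bad_set K eps m0 M')"
    unfolding monotone_on_def bad_set_def by auto
  then have "(\<lambda>M'. measure M (bad_set K eps m0 M')) \<longlonglongrightarrow> measure M (\<Inter>M'. bad_set K eps m0 M')"
    by (intro finite_Lim_measure_decseq) auto
  moreover have "(\<Inter>M'. bad_set K eps m0 M') = {}"
  proof -
    have "\<exists>t\<ge>m0. ennreal (real t * (trunc_growth K y - eps)) \<le> negF t y" if y: "y \<in> space M" for y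
    proof (rule exists_long_block_rate_ge[OF y])
      have "ereal (trunc_growth K y - eps) < ereal (trunc_growth K y)" using eps by simp
      also have "\<dots> \<le> growth y"
        using trunc_growth_le_orbit_growth[OF y K] orbit_growth_le_growth[OF y] by (rule order_trans)
      finally show "ereal (trunc_growth K y - eps) < growth y" .
    qed
    then show ?thesis unfolding bad_set_def by fastforce
  qed
  ultimately have "(\<lambda>M'. measure M (bad_set K eps m0 M')) \<longlonglongrightarrow> 0" by simp
  from order_tendstoD(2)[OF this d] show ?thesis using that by (auto dest: eventually_happens)
qed

lemma negF_ge_trunc_growth:
  assumes y: "y \<in> space M" and l: "real l > l0" and K: "K \<ge> 0" and eps: "eps > 0"
    and m0: "m0 \<ge> 1" and N: "N \<ge> 1"
  shows "ennreal (1 / \<alpha> (real l) * (real N * (trunc_growth K y - eps)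
      - K * (real l * real N / real m0
        + real (l + 1) * real (card {j\<in>{0..<N}. (\<Psi> ^^ j) y \<in> bad_set K eps m0 M'}) + real (M' + l + 1))))
    \<le> negF N y"
    (is "ennreal (_ * ?A) \<le> _")
proof -
  have "separated_blocks_bound (\<lambda>t j. negF t ((\<Psi> ^^ j) y)) l 0 N (ennreal ?A)"
    using separated_blocks_greedy[where g="\<lambda>t j. negF t ((\<Psi> ^^ j) y)" and s=0 and l=l
        and good="\<lambda>j. (\<Psi> ^^ j) y \<notin> bad_set K eps m0 M'" and a="trunc_growth K y - eps" and M=M',
        OF m0 _ K] N trunc_growth_le[OF y K] eps funpow_in_space[OF y]
    by (simp add: bad_set_def trunc_growth_funpow)
  then obtain n t where n: "1 \<le> n" and t: "\<forall>k\<in>{1..n}. 1 \<le> t k"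
    and len: "(n - 1) * l + (\<Sum>k=1..n. t k) = N"
    and A: "ennreal ?A \<le> (\<Sum>k=1..n. negF (t k) ((\<Psi> ^^ ((k - 1) * l + (\<Sum>j=1..k-1. t j))) y))"
    unfolding separated_blocks_bound_def by auto
  have "ennreal (1 / \<alpha> (real l) * ?A) = ennreal (1 / \<alpha> (real l)) * ennreal ?A"
    using \<alpha>_gap_ge_1[OF l] by (intro ennreal_mult') simp
  also have "\<dots> \<le> ennreal (1 / \<alpha> (real l))
      * (\<Sum>k=1..n. negF (t k) ((\<Psi> ^^ ((k - 1) * l + (\<Sum>j=1..k-1. t j))) y))"
    using A by (rule mult_left_mono) simp
  also have "\<dots> \<le> negF N y"
    using separated_superadditive_negF[OF n t l y] unfolding len .
  finally show ?thesis .
qed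

lemma nn_integral_negF_ge:
  assumes l: "real l > l0" and K: "K \<ge> 0" and eps: "eps > 0" and m0: "m0 \<ge> 1" and N: "N \<ge> 1"
  shows "ennreal (1 / \<alpha> (real l) * (real N * ((\<integral>y. trunc_growth K y \<partial>M) - eps)
      - K * (real l * real N / real m0 + real (l + 1) * real N * measure M (bad_set K eps m0 M')
        + real (M' + l + 1))))
    \<le> (\<integral>\<^sup>+y. negF N y \<partial>M)"
proof -
  define B where "B = bad_set K eps m0 M'"
  define visits where "visits y = (\<Sum>j<N. indicator B ((\<Psi> ^^ j) y) :: real)" for y
  define h where "h y = 1 / \<alpha> (real l) * (real N * (trunc_growth K y - eps)
      - K * (real l * real N / real m0 + real (l + 1) * visits y + real (M' + l + 1)))" for y
  have [measurable]: "B \<in> sets M" unfolding B_def by measurable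
  have int_trunc: "integrable M (trunc_growth K)"
    by (rule integrable_const_bound[where B=K]) (auto simp: trunc_growth_nonneg trunc_growth_le K)
  have int_indicator: "integrable M (\<lambda>y. indicator B ((\<Psi> ^^ j) y) :: real)" for j
    by (rule integrable_const_bound[where B=1]) (auto simp: indicator_def)
  then have int_visits: "integrable M visits" unfolding visits_def by auto
  have "(\<integral>y. visits y \<partial>M) = (\<Sum>j<N. \<integral>y. indicator B ((\<Psi> ^^ j) y) \<partial>M)"
    unfolding visits_def using int_indicator by (rule Bochner_Integration.integral_sum)
  also have "\<dots> = real N * measure M B"
    by (simp add: integral_funpow integral_indicator Int_absorb2 sets.sets_into_space)
  finally have "(\<integral>y. h y \<partial>M) = 1 / \<alpha> (real l) * (real N * ((\<integral>y. trunc_growth K y \<partial>M) - eps)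
      - K * (real l * real N / real m0 + real (l + 1) * real N * measure M B + real (M' + l + 1)))"
    unfolding h_def using int_trunc int_visits by (simp add: algebra_simps prob_space)
  moreover have "ennreal (\<integral>y. h y \<partial>M) \<le> (\<integral>\<^sup>+y. ennreal (h y) \<partial>M)"
    using int_trunc int_visits unfolding h_def by (intro ennreal_integral_le_nn_integral) auto
  moreover have "(\<integral>\<^sup>+y. ennreal (h y) \<partial>M) \<le> (\<integral>\<^sup>+y. negF N y \<partial>M)"
    using negF_ge_trunc_growth[OF _ l K eps m0 N]
    by (intro nn_integral_mono) (simp add: h_def visits_def B_def sum_indicator_eq_card)
  ultimately show ?thesis unfolding B_def by (metis order_trans)
qed

lemma lim_nonpos:
  assumes lim: "(\<lambda>n. nonpos_integral M (F n) / ereal (real n)) \<longlonglongrightarrow> L"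
  shows "L \<le> 0"
proof (rule LIMSEQ_le_const2[OF lim], intro exI[of _ 1] allI impI)
  fix n :: nat assume n: "1 \<le> n"
  have "nonpos_integral M (F n) / ereal (real n) \<le> 0 / ereal (real n)"
    using n unfolding nonpos_integral_F by (intro ereal_divide_right_mono) auto
  then show "nonpos_integral M (F n) / ereal (real n) \<le> 0" by simp
qed

lemma lim_le_of_nn_integral_negF_ge:
  assumes lim: "(\<lambda>n. nonpos_integral M (F n) / ereal (real n)) \<longlonglongrightarrow> L"
    and bound: "\<And>N. N \<ge> 1 \<Longrightarrow> ennreal (c * (real N * Q - C)) \<le> (\<integral>\<^sup>+y. negF N y \<partial>M)"
  shows "L \<le> ereal (- (c * Q))"
proof (rule LIMSEQ_le[OF lim])
  have "(\<lambda>N. - (c * Q) + c * C * (1 / real N)) \<longlonglongrightarrow> - (c * Q) + c * C * 0"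
    by (intro tendsto_intros lim_1_over_n)
  moreover have "\<forall>\<^sub>F N in sequentially. - (c * Q) + c * C * (1 / real N) = - (c * (real N * Q - C)) / real N"
    unfolding eventually_sequentially by (intro exI[of _ 1]) (auto simp: field_simps)
  ultimately have "(\<lambda>N. - (c * (real N * Q - C)) / real N) \<longlonglongrightarrow> - (c * Q)"
    by (simp add: tendsto_cong)
  then show "(\<lambda>N. ereal (- (c * (real N * Q - C)) / real N)) \<longlonglongrightarrow> ereal (- (c * Q))"
    by (rule tendsto_ereal)
  show "\<exists>N0. \<forall>N\<ge>N0. nonpos_integral M (F N) / ereal (real N) \<le> ereal (- (c * (real N * Q - C)) / real N)"
  proof (intro exI[of _ 1] allI impI)
    fix N :: nat assume N: "1 \<le> N"
    have "ereal (c * (real N * Q - C)) \<le> enn2ereal (ennreal (c * (real N * Q - C)))"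
      by (simp add: ennreal.rep_eq)
    also have "\<dots> \<le> enn2ereal (\<integral>\<^sup>+y. negF N y \<partial>M)"
      using bound[OF N] by (simp add: less_eq_ennreal.rep_eq)
    finally have "ereal (c * (real N * Q - C)) \<le> enn2ereal (\<integral>\<^sup>+y. negF N y \<partial>M)" .
    then have "nonpos_integral M (F N) \<le> ereal (- (c * (real N * Q - C)))"
      unfolding nonpos_integral_F by (metis ereal_minus_le_minus uminus_ereal.simps(1))
    then have "nonpos_integral M (F N) / ereal (real N) \<le> ereal (- (c * (real N * Q - C))) / ereal (real N)"
      using N by (intro ereal_divide_right_mono) auto
    then show "nonpos_integral M (F N) / ereal (real N) \<le> ereal (- (c * (real N * Q - C)) / real N)"
      using N by simp
  qed
qed

lemma lim_le_of_less_integral_trunc_growth: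
  assumes lim: "(\<lambda>n. nonpos_integral M (F n) / ereal (real n)) \<longlonglongrightarrow> L"
    and l: "real l > l0" and K: "K \<ge> 0" and A: "A * \<alpha> (real l) < (\<integral>y. trunc_growth K y \<partial>M)"
  shows "L \<le> ereal (- A)"
proof -
  define a where "a = \<alpha> (real l)"
  define \<delta> where "\<delta> = (\<integral>y. trunc_growth K y \<partial>M) - A * a"
  define eps where "eps = \<delta> / 4"
  have a: "a \<ge> 1" using \<alpha>_gap_ge_1[OF l] by (simp add: a_def)
  have \<delta>: "\<delta> > 0" using A by (simp add: \<delta>_def a_def)
  then have eps: "eps > 0" by (simp add: eps_def)
  define m0 where "m0 = nat \<lceil>4 * K * real l / \<delta>\<rceil> + 1"
  have m0: "m0 \<ge> 1" by (simp add: m0_def)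
  have m0_large: "K * real l / real m0 \<le> \<delta> / 4"
  proof -
    have "4 * K * real l / \<delta> \<le> real m0" unfolding m0_def by linarith
    then show ?thesis using m0 \<delta> by (simp add: divide_le_eq field_simps)
  qed
  define c where "c = K * real (l + 1)"
  have c: "c \<ge> 0" using K by (simp add: c_def)
  obtain M' where "measure M (bad_set K eps m0 M') < \<delta> / (4 * (c + 1))"
    using measure_bad_set_less[OF K eps, of "\<delta> / (4 * (c + 1))"] \<delta> c by auto
  moreover define \<mu> where "\<mu> = measure M (bad_set K eps m0 M')"
  ultimately have "(c + 1) * \<mu> \<le> (c + 1) * (\<delta> / (4 * (c + 1)))"
    using c by (intro mult_left_mono) auto
  also have "\<dots> = \<delta> / 4" using c by (simp add: field_simps)
  moreover have "(c + 1) * \<mu> = c * \<mu> + \<mu>" by (simp add: algebra_simps)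
  ultimately have \<mu>_small: "c * \<mu> \<le> \<delta> / 4"
    using measure_nonneg[of M "bad_set K eps m0 M'"] unfolding \<mu>_def by linarith
  define Q where "Q = (\<integral>y. trunc_growth K y \<partial>M) - eps - K * real l / real m0 - c * \<mu>"
  have "Q = A * a + \<delta> - \<delta> / 4 - K * real l / real m0 - c * \<mu>"
    unfolding Q_def eps_def \<delta>_def by simp
  then have "A * a < Q" using m0_large \<mu>_small \<delta> by linarith
  have "L \<le> ereal (- (1 / a * Q))"
  proof (rule lim_le_of_nn_integral_negF_ge[OF lim])
    fix N :: nat assume "N \<ge> 1"
    have "real N * ((\<integral>y. trunc_growth K y \<partial>M) - eps)
        - K * (real l * real N / real m0 + real (l + 1) * real N * \<mu> + real (M' + l + 1))
        = real N * Q - K * real (M' + l + 1)"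
      unfolding Q_def c_def by (simp add: algebra_simps)
    with nn_integral_negF_ge[OF l K eps m0 \<open>N \<ge> 1\<close>, of M']
    show "ennreal (1 / a * (real N * Q - K * real (M' + l + 1))) \<le> (\<integral>\<^sup>+y. negF N y \<partial>M)"
      unfolding a_def \<mu>_def by simp
  qed
  also have "ereal (- (1 / a * Q)) \<le> ereal (- A)"
    using \<open>A * a < Q\<close> a by (simp add: field_simps)
  finally show ?thesis .
qed

lemma lim_le_of_less_nn_integral_growth:
  assumes lim: "(\<lambda>n. nonpos_integral M (F n) / ereal (real n)) \<longlonglongrightarrow> L"
    and A: "0 \<le> A" and A_less: "ennreal A < (\<integral>\<^sup>+y. e2ennreal (growth y) \<partial>M)"
  shows "L \<le> ereal (- A)"
proof -
  have "ennreal A < (\<integral>\<^sup>+y. e2ennreal (orbit_growth y) \<partial>M)"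
    using A_less nn_integral_growth_le_orbit_growth by simp
  also have "\<dots> = (SUP K::nat. \<integral>\<^sup>+y. min (e2ennreal (orbit_growth y)) (of_nat K) \<partial>M)"
    by (rule nn_integral_SUP_min_of_nat) measurable
  finally obtain K :: nat where "ennreal A < (\<integral>\<^sup>+y. min (e2ennreal (orbit_growth y)) (of_nat K) \<partial>M)"
    by (auto simp: less_SUP_iff)
  then have trunc: "A < (\<integral>y. trunc_growth (real K) y \<partial>M)"
    unfolding nn_integral_trunc_growth using A by (simp add: ennreal_less_iff)
  obtain l :: nat where "real l > l0" "A * \<alpha> (real l) < (\<integral>y. trunc_growth (real K) y \<partial>M)"
  proof (cases "A = 0")
    case True
    obtain l :: nat where "real l > l0" using exists_gap_\<alpha>_less[of 2] by auto
    then show ?thesis using that True trunc by simp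
  next
    case False
    then have "(\<integral>y. trunc_growth (real K) y \<partial>M) / A > 1" using A trunc by simp
    from exists_gap_\<alpha>_less[OF this] obtain l :: nat
      where "real l > l0" "\<alpha> (real l) < (\<integral>y. trunc_growth (real K) y \<partial>M) / A" .
    then show ?thesis using that False A by (simp add: field_simps)
  qed
  then show ?thesis by (intro lim_le_of_less_integral_trunc_growth[OF lim]) auto
qed

lemma lim_le_nonpos_integral_liminf:
  assumes lim: "(\<lambda>n. nonpos_integral M (F n) / ereal (real n)) \<longlonglongrightarrow> L"
  shows "L \<le> nonpos_integral M (\<lambda>y. liminf (\<lambda>n. F n y / ereal (real n)))"
proof -
  define X where "X = (\<integral>\<^sup>+y. e2ennreal (growth y) \<partial>M)"
  have rhs: "nonpos_integral M (\<lambda>y. liminf (\<lambda>n. F n y / ereal (real n))) = - enn2ereal X"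
    unfolding nonpos_integral_def X_def uminus_liminf_eq_growth ..
  have below: "L \<le> ereal (- A)" if "0 \<le> A" "ennreal A < X" for A
    using lim_le_of_less_nn_integral_growth[OF lim that[unfolded X_def]] .
  show ?thesis
  proof (cases X)
    case (real x)
    have "L \<le> ereal (- x) + ereal e" if e: "0 < e" for e
    proof (cases "x \<le> e")
      case True
      then have "0 \<le> ereal (- x) + ereal e" by simp
      with lim_nonpos[OF lim] show ?thesis by (rule order_trans)
    next
      case False
      then show ?thesis using below[of "x - e"] e real by (simp add: ennreal_lessI)
    qed
    then show ?thesis using real rhs by (simp add: ereal_le_epsilon2)
  next
    case top
    have "L \<le> ereal (- r)" if "r \<ge> 0" for r using below[of r] that top by simp
    then have "L = - \<infinity>"
    proof (cases L)
      case (real x)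
      then show ?thesis using \<open>\<And>r. r \<ge> 0 \<Longrightarrow> L \<le> ereal (- r)\<close>[of "\<bar>x\<bar> + 1"] by simp
    qed (use lim_nonpos[OF lim] in simp_all)
    then show ?thesis by simp
  qed
qed

end

theorem propositionD1:
  fixes M :: "'a measure" and \<Psi> :: "'a \<Rightarrow> 'a"
    and F :: "nat \<Rightarrow> 'a \<Rightarrow> ereal"
    and l0 :: real and \<alpha> :: "real \<Rightarrow> real" and L :: ereal
  assumes prob: "prob_space M"
    and meas_\<Psi>: "\<Psi> \<in> M \<rightarrow>\<^sub>M M"
    and inv: "distr M M \<Psi> = M"
    and meas_F: "\<And>n. F n \<in> borel_measurable M"
    and F_nonpos: "\<And>n y. y \<in> space M \<Longrightarrow> F n y \<le> 0"
    and l0_nonneg: "l0 \<ge> 0"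
    and \<alpha>_ge1: "\<And>l. l \<ge> l0 \<Longrightarrow> \<alpha> l \<ge> 1"
    and \<alpha>_antimono: "\<And>l l'. l0 \<le> l \<Longrightarrow> l \<le> l' \<Longrightarrow> \<alpha> l' \<le> \<alpha> l"
    and \<alpha>_lim: "(\<alpha> \<longlongrightarrow> 1) at_top"
    and S: "\<And>n (t :: nat \<Rightarrow> nat) (l :: nat) y.
              n \<ge> 1 \<Longrightarrow> (\<forall>k\<in>{1..n}. t k \<ge> 1) \<Longrightarrow> real l > l0 \<Longrightarrow> y \<in> space M \<Longrightarrow>
              F ((n - 1) * l + (\<Sum>k=1..n. t k)) y
                \<le> ereal (1 / \<alpha> (real l)) *
                   (\<Sum>k=1..n. F (t k) ((\<Psi> ^^ ((k - 1) * l + (\<Sum>j=1..k-1. t j))) y))"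
    and lim: "(\<lambda>n. nonpos_integral M (F n) / ereal (real n)) \<longlonglongrightarrow> L"
  shows "L \<le> nonpos_integral M (\<lambda>y. liminf (\<lambda>n. F n y / ereal (real n)))"
proof -
  interpret separated_subadditive M \<Psi> F l0 \<alpha>
  proof (intro separated_subadditive.intro measure_preserving_map.intro
      measure_preserving_map_axioms.intro separated_subadditive_axioms.intro)
  qed (fact prob meas_\<Psi> inv meas_F F_nonpos \<alpha>_ge1 \<alpha>_lim S)+
  show ?thesis using lim by (rule lim_le_nonpos_integral_liminf)
qed

end
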